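(* Let $\mathbf s^1:\mathcal X\to\{0,1\}^m$ be a first selection rule and, for $c\in[k]$, let $\tilde{\mathbf d}_c:\{0,1\}^m\times\mathcal X\to\mathcal D_c$ be decision strategies and $\tilde{\mathbf s}_c:\mathcal D_c\times\mathcal X\to\{0,1\}^m$ selection strategies. Suppose that for every $c\in[k]$ the extended selection rule $\mathbf g_c(\mathbf S,\mathbf X)=\tilde{\mathbf s}_c(\tilde{\mathbf d}_c(\mathbf S,\mathbf X),\mathbf X)$ is contracting ($\mathbf g_c(\mathbf S,\mathbf X)\preceq\mathbf S$ with probability 1 for all $\mathbf S$) and increasing ($\mathbf g_c(\mathbf S,\mathbf X)\preceq\mathbf g_c(\mathbf S',\mathbf X)$ with probability 1 for all $\mathbf S\preceq\mathbf S'$). Then the parallel intersection procedure and the sequential composition procedure (defined in the context) converge to the same selected set and the same decisions.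
   Context: $\preceq$ is the componentwise order on $\{0,1\}^m$; $\bigcap$ of vectors in $\{0,1\}^m$ is the componentwise product. Parallel intersection: $\mathbf S^1=\mathbf s^1(\mathbf X)$; for $t\ge1$, $\mathbf D_c^t=\tilde{\mathbf d}_c(\mathbf S^t,\mathbf X)$ and $\mathbf S_c^{t+1}=\tilde{\mathbf s}_c(\mathbf D_c^t,\mathbf X)$ for all $c$, $\mathbf S^{t+1}=\bigcap_{c\in[k]}\mathbf S_c^{t+1}$; stop at the first $T$ with $\mathbf S^{T+1}=\mathbf S^T$. Sequential composition: $\mathbf S^1=\mathbf s^1(\mathbf X)$; for $t\ge1$, set $\mathbf S'^{t+1}_0=\mathbf S^t$ and for $c=1,\dots,k$, $\mathbf D_c^t=\tilde{\mathbf d}_c(\mathbf S'^{t+1}_{c-1},\mathbf X)$, $\mathbf S'^{t+1}_c=\tilde{\mathbf s}_c(\mathbf D_c^t,\mathbf X)$; then $\mathbf S^{t+1}=\mathbf S'^{t+1}_k$; stop at the first $T$ with $\mathbf S^{T+1}=\mathbf S^T$. Each procedure outputs its final selected set and decisions $(\mathbf D_c^T)_{c\in[k]}$. *)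

theory Defs
  imports Main
begin

text \<open>Binary vectors in {0,1}^m are represented as subsets of a finite coordinate
type 'i (with CARD('i) = m): the componentwise order is set inclusion and the
componentwise product is intersection. Decisions of all k strategies live in a
common type 'd.\<close>

definition ext_sel :: "(nat \<Rightarrow> 'i set \<Rightarrow> 'x \<Rightarrow> 'd) \<Rightarrow> (nat \<Rightarrow> 'd \<Rightarrow> 'x \<Rightarrow> 'i set)
    \<Rightarrow> nat \<Rightarrow> 'i set \<Rightarrow> 'x \<Rightarrow> 'i set" where
  "ext_sel dd ss c S X = ss c (dd c S X) X"

definition par_step :: "nat \<Rightarrow> (nat \<Rightarrow> 'i set \<Rightarrow> 'x \<Rightarrow> 'd) \<Rightarrow> (nat \<Rightarrow> 'd \<Rightarrow> 'x \<Rightarrow> 'i set)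
    \<Rightarrow> 'x \<Rightarrow> 'i set \<Rightarrow> 'i set" where
  "par_step k dd ss X S = (\<Inter>c\<in>{1..k}. ext_sel dd ss c S X)"

primrec seq_inner :: "(nat \<Rightarrow> 'i set \<Rightarrow> 'x \<Rightarrow> 'd) \<Rightarrow> (nat \<Rightarrow> 'd \<Rightarrow> 'x \<Rightarrow> 'i set)
    \<Rightarrow> 'x \<Rightarrow> 'i set \<Rightarrow> nat \<Rightarrow> 'i set" where
  "seq_inner dd ss X S 0 = S"
| "seq_inner dd ss X S (Suc c) = ss (Suc c) (dd (Suc c) (seq_inner dd ss X S c) X) X"

definition seq_step :: "nat \<Rightarrow> (nat \<Rightarrow> 'i set \<Rightarrow> 'x \<Rightarrow> 'd) \<Rightarrow> (nat \<Rightarrow> 'd \<Rightarrow> 'x \<Rightarrow> 'i set)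
    \<Rightarrow> 'x \<Rightarrow> 'i set \<Rightarrow> 'i set" where
  "seq_step k dd ss X S = seq_inner dd ss X S k"

definition iter_sel :: "('i set \<Rightarrow> 'i set) \<Rightarrow> 'i set \<Rightarrow> nat \<Rightarrow> 'i set" where
  "iter_sel step S1 t = (step ^^ (t - 1)) S1"

definition first_stop :: "(nat \<Rightarrow> 'i set) \<Rightarrow> nat \<Rightarrow> bool" where
  "first_stop S T \<longleftrightarrow> 1 \<le> T \<and> S (T + 1) = S T \<and> (\<forall>t. 1 \<le> t \<and> t < T \<longrightarrow> S (t + 1) \<noteq> S t)"

end

theory Submission
  imports Defs
begin

text \<open>Both round maps are monotone and deflationary, and their fixed points are exactly the
common fixed points of the extended selection rules g_c. Iterating a monotone deflationary
map from S^1 stops at the greatest fixed point below S^1, so both procedures stop at the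
greatest common fixed point of the g_c below S^1. At a common fixed point every intermediate
set of a sequential round equals that fixed point, so all decisions agree as well.\<close>

lemma iter_sel_Suc [simp]: "iter_sel f S1 (Suc t) = (f ^^ t) S1"
  by (simp add: iter_sel_def)

lemma funpow_deflationary:
  assumes "\<And>S. f S \<subseteq> S"
  shows "(f ^^ n) S1 \<subseteq> S1"
  by (induction n) (use assms in auto)

lemma fixpoint_subset_funpow:
  assumes "mono f" and "f F = F" and "F \<subseteq> S1"
  shows "F \<subseteq> (f ^^ n) S1"
proof -
  have "(f ^^ n) F = F"
    by (induction n) (simp_all add: assms(2))
  with funpow_mono[OF assms(1) assms(3), of n] show ?thesis
    by simp
qed

lemma card_funpow_strict_descent:
  assumes "finite S1" and "\<And>S. f S \<subseteq> S"
    and "\<forall>m<n. (f ^^ Suc m) S1 \<noteq> (f ^^ m) S1"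
  shows "card ((f ^^ n) S1) + n \<le> card S1"
  using assms(3)
proof (induction n)
  case 0
  then show ?case by simp
next
  case (Suc n)
  have "(f ^^ Suc n) S1 \<subset> (f ^^ n) S1"
    using Suc.prems assms(2)[of "(f ^^ n) S1"] by auto
  moreover have "finite ((f ^^ n) S1)"
    using funpow_deflationary[OF assms(2)] assms(1) by (rule finite_subset)
  ultimately have "card ((f ^^ Suc n) S1) < card ((f ^^ n) S1)"
    by (rule psubset_card_mono[rotated])
  with Suc show ?case by simp
qed

lemma first_stop_iter_sel_exists:
  assumes "finite S1" and "\<And>S. f S \<subseteq> S"
  shows "\<exists>T. first_stop (iter_sel f S1) T"
proof -
  let ?stable = "\<lambda>n. (f ^^ Suc n) S1 = (f ^^ n) S1"
  have "\<exists>n. ?stable n"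
    using card_funpow_strict_descent[OF assms, of "Suc (card S1)"] by auto
  then obtain n where stop: "?stable n" and before: "\<forall>m<n. \<not> ?stable m"
    unfolding exists_least_iff[of ?stable] by (elim exE conjE)
  have "first_stop (iter_sel f S1) (Suc n)"
    unfolding first_stop_def
  proof (intro conjI allI impI)
    fix t assume "1 \<le> t \<and> t < Suc n"
    then obtain m where "t = Suc m" "m < n"
      by (cases t) auto
    with before show "iter_sel f S1 (t + 1) \<noteq> iter_sel f S1 t"
      by simp
  qed (use stop in simp_all)
  then show ?thesis ..
qed

lemma first_stop_iter_sel_fixpoint:
  assumes "first_stop (iter_sel f S1) T"
  shows "f (iter_sel f S1 T) = iter_sel f S1 T"
proof -
  obtain n where "T = Suc n"
    using assms by (cases T) (auto simp: first_stop_def)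
  with assms show ?thesis
    by (simp add: first_stop_def)
qed

lemma first_stop_iter_sel_greatest_fixpoint:
  assumes "mono f" and "\<And>S. f S \<subseteq> S" and "first_stop (iter_sel f S1) T"
  shows "iter_sel f S1 T = \<Union>{F. F \<subseteq> S1 \<and> f F = F}"
proof -
  have "iter_sel f S1 T \<subseteq> S1"
    unfolding iter_sel_def by (rule funpow_deflationary[OF assms(2)])
  moreover have "f (iter_sel f S1 T) = iter_sel f S1 T"
    using assms(3) by (rule first_stop_iter_sel_fixpoint)
  moreover have "F \<subseteq> iter_sel f S1 T" if "F \<subseteq> S1" and "f F = F" for F
    unfolding iter_sel_def by (rule fixpoint_subset_funpow[OF assms(1) that(2,1)])
  ultimately show ?thesis
    by blast
qed

lemma seq_inner_Suc_ext_sel: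
  "seq_inner dd ss X S (Suc c) = ext_sel dd ss (Suc c) (seq_inner dd ss X S c) X"
  by (simp add: ext_sel_def)

declare seq_inner.simps(2) [simp del] seq_inner_Suc_ext_sel [simp]

locale contracting_increasing_rules =
  fixes k :: nat
    and dd :: "nat \<Rightarrow> 'i set \<Rightarrow> 'x \<Rightarrow> 'd"
    and ss :: "nat \<Rightarrow> 'd \<Rightarrow> 'x \<Rightarrow> 'i set"
    and X :: 'x
  assumes contracting: "c \<in> {1..k} \<Longrightarrow> ext_sel dd ss c S X \<subseteq> S"
    and increasing: "c \<in> {1..k} \<Longrightarrow> S \<subseteq> S' \<Longrightarrow> ext_sel dd ss c S X \<subseteq> ext_sel dd ss c S' X"
begin

lemma par_step_mono: "mono (par_step k dd ss X)"
  unfolding par_step_def by (intro monoI INF_superset_mono[OF order_refl] increasing)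

lemma par_step_deflationary:
  assumes "1 \<le> k"
  shows "par_step k dd ss X S \<subseteq> S"
  using assms contracting[of 1 S] unfolding par_step_def by auto

lemma par_step_fixpoint_iff:
  assumes "1 \<le> k"
  shows "par_step k dd ss X S = S \<longleftrightarrow> (\<forall>c\<in>{1..k}. ext_sel dd ss c S X = S)"
proof
  assume fixed: "par_step k dd ss X S = S"
  show "\<forall>c\<in>{1..k}. ext_sel dd ss c S X = S"
  proof
    fix c assume c: "c \<in> {1..k}"
    then have "par_step k dd ss X S \<subseteq> ext_sel dd ss c S X"
      unfolding par_step_def by (rule INT_lower)
    with fixed show "ext_sel dd ss c S X = S"
      by (simp add: antisym contracting[OF c])
  qed
next
  assume "\<forall>c\<in>{1..k}. ext_sel dd ss c S X = S"
  with assms show "par_step k dd ss X S = S"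
    unfolding par_step_def by auto
qed

lemma seq_inner_mono:
  assumes "c \<le> k"
  shows "mono (\<lambda>S. seq_inner dd ss X S c)"
  using assms
proof (induction c)
  case 0
  then show ?case by (simp add: mono_def)
next
  case (Suc c)
  show ?case
  proof (rule monoI)
    fix S S' :: "'i set"
    assume "S \<subseteq> S'"
    moreover have "mono (\<lambda>S. seq_inner dd ss X S c)"
      using Suc by simp
    ultimately have "seq_inner dd ss X S c \<subseteq> seq_inner dd ss X S' c"
      by (auto dest: monoD)
    with Suc.prems show "seq_inner dd ss X S (Suc c) \<subseteq> seq_inner dd ss X S' (Suc c)"
      by (simp add: increasing)
  qed
qed

lemma seq_inner_antimono:
  assumes "c \<le> d" and "d \<le> k"
  shows "seq_inner dd ss X S d \<subseteq> seq_inner dd ss X S c"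
  using assms
proof (induction d)
  case 0
  then show ?case by simp
next
  case (Suc d)
  have "seq_inner dd ss X S (Suc d) \<subseteq> seq_inner dd ss X S d"
    using Suc.prems contracting[of "Suc d"] by simp
  with Suc show ?case
    by (cases "c = Suc d") auto
qed

lemma seq_inner_common_fixpoint:
  assumes "\<forall>c\<in>{1..k}. ext_sel dd ss c S X = S" and "c \<le> k"
  shows "seq_inner dd ss X S c = S"
  using assms(2) by (induction c) (use assms(1) in \<open>simp_all\<close>)

lemma seq_step_mono: "mono (seq_step k dd ss X)"
  unfolding seq_step_def using seq_inner_mono[of k] by (simp add: mono_def)

lemma seq_step_deflationary: "seq_step k dd ss X S \<subseteq> S"
  unfolding seq_step_def using seq_inner_antimono[of 0 k S] by simp

lemma seq_step_fixpoint_iff: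
  "seq_step k dd ss X S = S \<longleftrightarrow> (\<forall>c\<in>{1..k}. ext_sel dd ss c S X = S)"
proof
  assume fixed: "seq_step k dd ss X S = S"
  \<comment> \<open>S = S'_k \<subseteq> S'_c \<subseteq> S'_0 = S squeezes every intermediate set to S.\<close>
  have inner: "seq_inner dd ss X S c = S" if "c \<le> k" for c
    using seq_inner_antimono[of c k S] seq_inner_antimono[of 0 c S] fixed that
    by (simp add: seq_step_def)
  show "\<forall>c\<in>{1..k}. ext_sel dd ss c S X = S"
  proof
    fix c assume "c \<in> {1..k}"
    then obtain b where "c = Suc b" "b < k"
      by (cases c) auto
    then show "ext_sel dd ss c S X = S"
      using inner[of b] inner[of c] by simp
  qed
next
  assume "\<forall>c\<in>{1..k}. ext_sel dd ss c S X = S"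
  then show "seq_step k dd ss X S = S"
    unfolding seq_step_def by (rule seq_inner_common_fixpoint) simp
qed

end

theorem proposition9:
  fixes k :: nat
    and s1 :: "'x \<Rightarrow> ('i::finite) set"
    and dd :: "nat \<Rightarrow> 'i set \<Rightarrow> 'x \<Rightarrow> 'd"
    and ss :: "nat \<Rightarrow> 'd \<Rightarrow> 'x \<Rightarrow> 'i set"
    and X :: 'x
  assumes k_pos: "1 \<le> k"
    and contracting: "\<And>c S. c \<in> {1..k} \<Longrightarrow> ext_sel dd ss c S X \<subseteq> S"
    and increasing: "\<And>c S S'. c \<in> {1..k} \<Longrightarrow> S \<subseteq> S' \<Longrightarrow>
                        ext_sel dd ss c S X \<subseteq> ext_sel dd ss c S' X"
  shows "\<exists>Tp Ts.
           first_stop (iter_sel (par_step k dd ss X) (s1 X)) Tp \<and>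
           first_stop (iter_sel (seq_step k dd ss X) (s1 X)) Ts \<and>
           iter_sel (par_step k dd ss X) (s1 X) Tp = iter_sel (seq_step k dd ss X) (s1 X) Ts \<and>
           (\<forall>c\<in>{1..k}. dd c (iter_sel (par_step k dd ss X) (s1 X) Tp) X =
                        dd c (seq_inner dd ss X (iter_sel (seq_step k dd ss X) (s1 X) Ts) (c - 1)) X)"
proof -
  interpret contracting_increasing_rules k dd ss X
    using contracting increasing by unfold_locales
  obtain Tp where Tp: "first_stop (iter_sel (par_step k dd ss X) (s1 X)) Tp"
    using first_stop_iter_sel_exists[OF finite par_step_deflationary[OF k_pos]] ..
  obtain Ts where Ts: "first_stop (iter_sel (seq_step k dd ss X) (s1 X)) Ts"
    using first_stop_iter_sel_exists[OF finite seq_step_deflationary] ..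
  define S where "S = iter_sel (seq_step k dd ss X) (s1 X) Ts"
  have same_limit: "iter_sel (par_step k dd ss X) (s1 X) Tp = S"
    unfolding S_def
    using first_stop_iter_sel_greatest_fixpoint[OF par_step_mono par_step_deflationary[OF k_pos] Tp]
      first_stop_iter_sel_greatest_fixpoint[OF seq_step_mono seq_step_deflationary Ts]
    by (simp add: par_step_fixpoint_iff[OF k_pos] seq_step_fixpoint_iff)
  have "\<forall>c\<in>{1..k}. ext_sel dd ss c S X = S"
    using first_stop_iter_sel_fixpoint[OF Ts] by (simp add: S_def seq_step_fixpoint_iff)
  then have "\<forall>c\<in>{1..k}. seq_inner dd ss X S (c - 1) = S"
    by (auto intro!: seq_inner_common_fixpoint)
  then have "\<forall>c\<in>{1..k}. dd c (iter_sel (par_step k dd ss X) (s1 X) Tp) X =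
                       dd c (seq_inner dd ss X S (c - 1)) X"
    by (simp add: same_limit)
  with Tp Ts same_limit show ?thesis
    unfolding S_def by blast
qed

end
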